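(* (1) Let $a\in B(H)$. If $a^2=a$ and $\|a\|\le1$, then $a^*=a$, i.e., $a$ is an orthogonal projection. (2) Let $p\in B(H)$ be an orthogonal projection and let $b,c\in B(H)$ satisfy $c^*b=p$ and $\|b+c\|\le2$. Then $\ker p\subset\ker b\cap\ker c$ if and only if $b=c$. In this case, $\ker p=\ker b=\ker c$.
   Context: $H$ is a Hilbert space and $B(H)$ the bounded operators on $H$. *)

theory Defs
  imports "HOL-Analysis.Analysis"
begin

class complex_vector = real_vector +
  fixes scaleC :: "complex \<Rightarrow> 'a \<Rightarrow> 'a" (infixr \<open>*\<^sub>C\<close> 75)
  assumes scaleC_add_right: "a *\<^sub>C (x + y) = a *\<^sub>C x + a *\<^sub>C y"
    and scaleC_add_left: "(a + b) *\<^sub>C x = a *\<^sub>C x + b *\<^sub>C x"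
    and scaleC_scaleC: "a *\<^sub>C (b *\<^sub>C x) = (a * b) *\<^sub>C x"
    and scaleC_one: "1 *\<^sub>C x = x"
    and scaleR_scaleC: "scaleR r x = complex_of_real r *\<^sub>C x"

class complex_inner = complex_vector + real_normed_vector +
  fixes cinner :: "'a \<Rightarrow> 'a \<Rightarrow> complex"
  assumes cinner_commute: "cinner x y = cnj (cinner y x)"
    and cinner_add_left: "cinner (x + y) z = cinner x z + cinner y z"
    and cinner_scaleC_left: "cinner (r *\<^sub>C x) y = cnj r * cinner x y"
    and cinner_self_real: "Im (cinner x x) = 0"
    and cinner_self_nonneg: "0 \<le> Re (cinner x x)"
    and cinner_self_eq_zero: "cinner x x = 0 \<longleftrightarrow> x = 0"
    and norm_eq_sqrt_cinner: "norm x = sqrt (Re (cinner x x))"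

class chilbert_space = complex_inner + complete_space

definition bounded_clinear :: "('a::complex_inner \<Rightarrow> 'b::complex_inner) \<Rightarrow> bool" where
  "bounded_clinear f \<longleftrightarrow> bounded_linear f \<and> (\<forall>c x. f (c *\<^sub>C x) = c *\<^sub>C f x)"

definition cadjoint :: "('a::complex_inner \<Rightarrow> 'b::complex_inner) \<Rightarrow> 'b \<Rightarrow> 'a" where
  "cadjoint f = (SOME g. \<forall>x y. cinner (f x) y = cinner x (g y))"

definition ker :: "('a \<Rightarrow> 'b::zero) \<Rightarrow> 'a set" where
  "ker f = {x. f x = 0}"

definition is_orth_proj :: "('a::complex_inner \<Rightarrow> 'a) \<Rightarrow> bool" where
  "is_orth_proj p \<longleftrightarrow> bounded_clinear p \<and> p \<circ> p = p \<and> cadjoint p = p"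

end

theory Submission
  imports Defs
begin

text \<open>
  (1) Let \<open>a\<close> be an idempotent contraction, \<open>a u = u\<close> and \<open>a y = 0\<close>. Then \<open>a\<close> maps every
  point \<open>u + t y\<close> of the real line through \<open>u\<close> to \<open>u\<close>, so \<open>u\<close> is the shortest point on it and
  \<open>Re <u, y> = 0\<close>; doing the same with \<open>i y\<close> gives \<open><u, y> = 0\<close>. Thus the range of \<open>a\<close> is
  orthogonal to its kernel, which makes \<open>a\<close> self-adjoint.

  (2) For \<open>u\<close> in the range of \<open>p\<close>, \<open>c\<^sup>* b u = u\<close> gives \<open>Re <b u, c u> = ||u||\<^sup>2\<close>, so by the
  parallelogram law \<open>||b u - c u||\<^sup>2 = ||b u + c u||\<^sup>2 - 4 ||u||\<^sup>2 \<le> 0\<close>. If \<open>ker p\<close> lies in both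
  kernels, \<open>b\<close> and \<open>c\<close> factor through \<open>p\<close>, hence \<open>b = c\<close>. Conversely, if \<open>b = c\<close> then
  \<open>||b x||\<^sup>2 = <x, p x> = ||p x||\<^sup>2\<close>, so \<open>ker b = ker p\<close>.
\<close>

lemma cinner_add_right: "cinner x (y + z) = cinner x y + cinner x (z::'a::complex_inner)"
  by (metis cinner_commute cinner_add_left complex_cnj_add)

lemma cinner_scaleC_right: "cinner x (r *\<^sub>C y) = r * cinner x (y::'a::complex_inner)"
  by (metis cinner_commute cinner_scaleC_left complex_cnj_mult complex_cnj_cnj)

lemma cinner_scaleR_left: "cinner (r *\<^sub>R x) y = of_real r * cinner x (y::'a::complex_inner)"
  by (simp add: scaleR_scaleC cinner_scaleC_left)

lemma cinner_scaleR_right: "cinner x (r *\<^sub>R y) = of_real r * cinner x (y::'a::complex_inner)"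
  by (simp add: scaleR_scaleC cinner_scaleC_right)

lemma cinner_zero_left [simp]: "cinner 0 (y::'a::complex_inner) = 0"
  using cinner_scaleR_left[of 0 "0::'a" y] by simp

lemma cinner_zero_right [simp]: "cinner x (0::'a::complex_inner) = 0"
  using cinner_scaleR_right[of x 0 "0::'a"] by simp

lemma cinner_minus_left: "cinner (- x) (y::'a::complex_inner) = - cinner x y"
  using cinner_scaleR_left[of "-1" x y] by simp

lemma cinner_minus_right: "cinner x (- y::'a::complex_inner) = - cinner x y"
  using cinner_scaleR_right[of x "-1" y] by simp

lemma cinner_diff_left: "cinner (x - y) (z::'a::complex_inner) = cinner x z - cinner y z"
  by (simp only: diff_conv_add_uminus cinner_add_left cinner_minus_left)

lemma cinner_diff_right: "cinner x (y - z::'a::complex_inner) = cinner x y - cinner x z"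
  by (simp only: diff_conv_add_uminus cinner_add_right cinner_minus_right)

lemma scaleC_zero_right [simp]: "r *\<^sub>C (0::'a::complex_vector) = 0"
  using scaleC_add_right[of r "0::'a" 0] by simp

lemma cinner_eqI:
  fixes y z :: "'a::complex_inner"
  assumes "\<And>x. cinner x y = cinner x z"
  shows "y = z"
proof -
  have "cinner (y - z) (y - z) = 0"
    using assms[of "y - z"] by (simp add: cinner_diff_right)
  then show ?thesis by (simp add: cinner_self_eq_zero)
qed

lemma power2_norm_eq_cinner: "(norm x)\<^sup>2 = Re (cinner x (x::'a::complex_inner))"
  by (simp add: norm_eq_sqrt_cinner cinner_self_nonneg)

lemma Re_cinner_commute: "Re (cinner y x) = Re (cinner x (y::'a::complex_inner))"
  by (subst cinner_commute) simp

lemma power2_norm_add: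
  "(norm (x + y))\<^sup>2 = (norm x)\<^sup>2 + (norm y)\<^sup>2 + 2 * Re (cinner x (y::'a::complex_inner))"
  unfolding power2_norm_eq_cinner
  by (simp add: cinner_add_left cinner_add_right Re_cinner_commute[of y x])

lemma power2_norm_diff:
  "(norm (x - y))\<^sup>2 = (norm x)\<^sup>2 + (norm y)\<^sup>2 - 2 * Re (cinner x (y::'a::complex_inner))"
  unfolding power2_norm_eq_cinner
  by (simp add: cinner_diff_left cinner_diff_right Re_cinner_commute[of y x])

lemma power2_norm_midpoint_diff:
  fixes x k l :: "'a::complex_inner"
  shows "(norm (k - l))\<^sup>2 = 2 * (norm (x - k))\<^sup>2 + 2 * (norm (x - l))\<^sup>2
    - 4 * (norm (x - (1/2) *\<^sub>R (k + l)))\<^sup>2"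
proof -
  have "(x - k) + (x - l) = 2 *\<^sub>R (x - (1/2) *\<^sub>R (k + l))"
    by (simp add: algebra_simps scaleR_2)
  then have "(norm ((x - k) + (x - l)))\<^sup>2 = 4 * (norm (x - (1/2) *\<^sub>R (k + l)))\<^sup>2"
    by (simp add: power_mult_distrib)
  moreover have "k - l = (x - l) - (x - k)"
    by simp
  ultimately show ?thesis
    by (simp only: power2_norm_add power2_norm_diff Re_cinner_commute[of "x - k"]) simp
qed

lemma power2_norm_diff_projection:
  fixes x y :: "'a::complex_inner"
  assumes "y \<noteq> 0"
  defines "r \<equiv> Re (cinner x y)"
  shows "(norm (x - (r / (norm y)\<^sup>2) *\<^sub>R y))\<^sup>2 = (norm x)\<^sup>2 - r\<^sup>2 / (norm y)\<^sup>2"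
proof -
  have "(norm (x - t *\<^sub>R y))\<^sup>2 = (norm x)\<^sup>2 + (t\<^sup>2 * (norm y)\<^sup>2 - 2 * t * r)" for t
    by (simp add: power2_norm_diff cinner_scaleR_right r_def power_mult_distrib)
  moreover have "(r / (norm y)\<^sup>2)\<^sup>2 * (norm y)\<^sup>2 - 2 * (r / (norm y)\<^sup>2) * r = - (r\<^sup>2 / (norm y)\<^sup>2)"
    using assms by (simp add: field_simps power2_eq_square)
  ultimately show ?thesis
    by simp
qed

lemma Re_cinner_le_norm_mult: "\<bar>Re (cinner x y)\<bar> \<le> norm x * norm (y::'a::complex_inner)"
proof (cases "y = 0")
  case False
  have "(Re (cinner x y))\<^sup>2 / (norm y)\<^sup>2 \<le> (norm x)\<^sup>2"
    using power2_norm_diff_projection[OF False, of x] zero_le_power2 by (metis diff_ge_0_iff_ge)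
  then have "(Re (cinner x y))\<^sup>2 \<le> (norm x * norm y)\<^sup>2"
    using False by (simp add: divide_le_eq power_mult_distrib)
  then show ?thesis
    by (metis abs_le_square_iff abs_mult abs_norm_cancel)
qed simp

lemma Re_cinner_eq_0_if_norm_le_norm_add:
  fixes w k :: "'a::complex_inner"
  assumes "\<And>t. norm w \<le> norm (w + t *\<^sub>R k)"
  shows "Re (cinner w k) = 0"
proof (cases "k = 0")
  case False
  let ?r = "Re (cinner w k)"
  have "norm w \<le> norm (w - (?r / (norm k)\<^sup>2) *\<^sub>R k)"
    using assms[of "- (?r / (norm k)\<^sup>2)"] by simp
  then have "(norm w)\<^sup>2 \<le> (norm w)\<^sup>2 - ?r\<^sup>2 / (norm k)\<^sup>2"
    unfolding power2_norm_diff_projection[OF False, symmetric] by (simp add: power_mono)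
  then show ?thesis
    using False by (simp add: divide_le_0_iff)
qed simp

lemma cnj_mult_self: "cnj z * z = complex_of_real ((cmod z)\<^sup>2)"
  by (subst mult.commute) (rule complex_norm_square[symmetric])

lemma norm_scaleC: "norm (r *\<^sub>C x) = cmod r * norm (x::'a::complex_inner)"
proof -
  have "(norm (r *\<^sub>C x))\<^sup>2 = Re (cnj r * r * cinner x x)"
    by (simp only: power2_norm_eq_cinner cinner_scaleC_left cinner_scaleC_right ac_simps)
  also have "\<dots> = (cmod r * norm x)\<^sup>2"
    by (simp add: cnj_mult_self power_mult_distrib power2_norm_eq_cinner)
  finally show ?thesis
    by (simp add: power2_eq_iff_nonneg)
qed

lemma norm_cinner_le: "cmod (cinner x y) \<le> norm x * norm (y::'a::complex_inner)"
proof -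
  let ?z = "cinner x y"
  have "(cmod ?z)\<^sup>2 = Re (cinner x (cnj ?z *\<^sub>C y))"
    by (simp add: cinner_scaleC_right cnj_mult_self)
  also have "\<dots> \<le> norm x * norm (cnj ?z *\<^sub>C y)"
    using Re_cinner_le_norm_mult abs_le_iff by blast
  also have "\<dots> = cmod ?z * (norm x * norm y)"
    by (simp add: norm_scaleC)
  finally show ?thesis
    by (cases "?z = 0") (simp_all add: power2_eq_square)
qed

lemma bounded_linear_cinner_right: "bounded_linear (cinner (x::'a::complex_inner))"
proof (rule bounded_linear_intro[where K = "norm x"])
  show "cmod (cinner x y) \<le> norm y * norm x" for y
    using norm_cinner_le[of x y] by (simp add: mult.commute)
qed (simp_all add: cinner_add_right cinner_scaleR_right scaleR_conv_of_real)

lemma Cauchy_minimizing_sequence: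
  fixes x :: "'a::complex_inner" and k :: "nat \<Rightarrow> 'a"
  assumes mid: "\<And>a b. a \<in> K \<Longrightarrow> b \<in> K \<Longrightarrow> (1/2) *\<^sub>R (a + b) \<in> K"
    and lower: "\<And>l. l \<in> K \<Longrightarrow> d \<le> norm (x - l)" and "0 \<le> d"
    and k: "\<And>n. k n \<in> K"
    and approx: "\<And>n. (norm (x - k n))\<^sup>2 \<le> d\<^sup>2 + inverse (Suc n)"
  shows "Cauchy k"
proof (rule metric_CauchyI)
  have bound: "(norm (k m - k n))\<^sup>2 \<le> 2 * inverse (Suc m) + 2 * inverse (Suc n)" for m n
  proof -
    have "d\<^sup>2 \<le> (norm (x - (1/2) *\<^sub>R (k m + k n)))\<^sup>2"
      using lower[OF mid[OF k k]] \<open>0 \<le> d\<close> by (simp add: power_mono)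
    then show ?thesis
      using power2_norm_midpoint_diff[of "k m" "k n" x] approx[of m] approx[of n] by linarith
  qed
  fix e :: real
  assume "0 < e"
  then obtain N where N: "inverse (real (Suc N)) < e\<^sup>2 / 4"
    using reals_Archimedean[of "e\<^sup>2 / 4"] by auto
  have "dist (k m) (k n) < e" if "N \<le> m" "N \<le> n" for m n
  proof -
    have "inverse (real (Suc m)) \<le> inverse (Suc N)" "inverse (real (Suc n)) \<le> inverse (Suc N)"
      using that by (simp_all add: le_imp_inverse_le)
    then have "(norm (k m - k n))\<^sup>2 < e\<^sup>2"
      using bound[of m n] N by linarith
    then have "(dist (k m) (k n))\<^sup>2 < e\<^sup>2"
      by (simp add: dist_norm)
    then show ?thesis
      using \<open>0 < e\<close> by (simp add: power_less_imp_less_base)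
  qed
  then show "\<exists>M. \<forall>m\<ge>M. \<forall>n\<ge>M. dist (k m) (k n) < e"
    by blast
qed

lemma closest_point_exists_midpoint_convex:
  fixes x :: "'a::chilbert_space"
  assumes "closed K" and mid: "\<And>a b. a \<in> K \<Longrightarrow> b \<in> K \<Longrightarrow> (1/2) *\<^sub>R (a + b) \<in> K"
    and "K \<noteq> {}"
  shows "\<exists>k\<in>K. \<forall>l\<in>K. norm (x - k) \<le> norm (x - l)"
proof -
  define d where "d = (INF l\<in>K. norm (x - l))"
  have bdd: "bdd_below ((\<lambda>l. norm (x - l)) ` K)"
    by (auto intro: bdd_belowI[of _ 0])
  have lower: "d \<le> norm (x - l)" if "l \<in> K" for l
    unfolding d_def using bdd that by (rule cINF_lower)
  have "0 \<le> d"
    unfolding d_def using \<open>K \<noteq> {}\<close> by (intro cINF_greatest) auto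
  have "\<exists>l\<in>K. (norm (x - l))\<^sup>2 \<le> d\<^sup>2 + inverse (Suc n)" for n
  proof -
    have "d < sqrt (d\<^sup>2 + inverse (Suc n))"
      using \<open>0 \<le> d\<close> by (intro real_less_rsqrt) simp
    then obtain l where "l \<in> K" "norm (x - l) < sqrt (d\<^sup>2 + inverse (Suc n))"
      using cINF_less_iff[OF \<open>K \<noteq> {}\<close> bdd] unfolding d_def by blast
    then show ?thesis
      by (metis add_nonneg_nonneg inverse_nonnegative_iff_nonnegative less_eq_real_def
          norm_ge_zero of_nat_0_le_iff power_mono real_sqrt_pow2 zero_le_power2)
  qed
  then obtain k where k: "\<And>n. k n \<in> K"
    and approx: "\<And>n. (norm (x - k n))\<^sup>2 \<le> d\<^sup>2 + inverse (Suc n)"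
    by metis
  obtain k0 where lim: "k \<longlonglongrightarrow> k0"
    using Cauchy_minimizing_sequence[OF mid lower \<open>0 \<le> d\<close> k approx] Cauchy_convergent_iff
      convergent_def by blast
  have "(norm (x - k0))\<^sup>2 \<le> d\<^sup>2 + 0"
  proof (rule LIMSEQ_le)
    show "(\<lambda>n. (norm (x - k n))\<^sup>2) \<longlonglongrightarrow> (norm (x - k0))\<^sup>2"
      by (intro tendsto_intros lim)
    show "(\<lambda>n. d\<^sup>2 + inverse (real (Suc n))) \<longlonglongrightarrow> d\<^sup>2 + 0"
      by (intro tendsto_intros LIMSEQ_inverse_real_of_nat)
  qed (use approx in auto)
  then have "norm (x - k0) \<le> d"
    using \<open>0 \<le> d\<close> by (simp add: power2_le_iff_abs_le)
  moreover have "k0 \<in> K"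
    using closed_sequentially[OF \<open>closed K\<close> k lim] .
  ultimately show ?thesis
    using lower by force
qed

lemma riesz_representation_Re:
  fixes \<psi> :: "'a::chilbert_space \<Rightarrow> real"
  assumes "bounded_linear \<psi>"
  shows "\<exists>z. \<forall>x. \<psi> x = Re (cinner z x)"
proof (cases "\<forall>x. \<psi> x = 0")
  case False
  then obtain x0 where "\<psi> x0 \<noteq> 0"
    by blast
  interpret \<psi>: bounded_linear \<psi>
    by fact
  define K where "K = {x. \<psi> x = 0}"
  have "closed K"
    unfolding K_def by (rule closed_Collect_eq) (auto intro: linear_continuous_on assms)
  moreover have "(1/2) *\<^sub>R (a + b) \<in> K" if "a \<in> K" "b \<in> K" for a b
    using that by (simp add: K_def \<psi>.add \<psi>.scale)
  moreover have "K \<noteq> {}"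
    using \<psi>.zero unfolding K_def by blast
  ultimately obtain k0 where "k0 \<in> K" and min: "\<And>l. l \<in> K \<Longrightarrow> norm (x0 - k0) \<le> norm (x0 - l)"
    using closest_point_exists_midpoint_convex[of K x0] by blast
  define w where "w = x0 - k0"
  have "\<psi> w = \<psi> x0"
    using \<open>k0 \<in> K\<close> by (simp add: w_def \<psi>.diff K_def)
  then have "w \<noteq> 0"
    using \<open>\<psi> x0 \<noteq> 0\<close> by auto
  have orth: "Re (cinner w l) = 0" if "l \<in> K" for l
  proof (rule Re_cinner_eq_0_if_norm_le_norm_add)
    fix t
    have "k0 - t *\<^sub>R l \<in> K"
      using that \<open>k0 \<in> K\<close> by (simp add: K_def \<psi>.diff \<psi>.scale)
    then show "norm w \<le> norm (w + t *\<^sub>R l)"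
      using min by (force simp: w_def algebra_simps)
  qed
  show ?thesis
  proof (intro exI allI)
    fix x
    have "\<psi> x *\<^sub>R w - \<psi> w *\<^sub>R x \<in> K"
      by (simp add: K_def \<psi>.diff \<psi>.scale)
    then have "\<psi> x * (norm w)\<^sup>2 = \<psi> w * Re (cinner w x)"
      using orth by (force simp: cinner_diff_right cinner_scaleR_right power2_norm_eq_cinner)
    then show "\<psi> x = Re (cinner ((\<psi> w / (norm w)\<^sup>2) *\<^sub>R w) x)"
      using \<open>w \<noteq> 0\<close> by (simp add: cinner_scaleR_left field_simps)
  qed
qed (intro exI[of _ 0], simp)

lemma riesz_representation:
  fixes \<phi> :: "'a::chilbert_space \<Rightarrow> complex"
  assumes "bounded_linear \<phi>" and scaleC: "\<And>c x. \<phi> (c *\<^sub>C x) = c * \<phi> x"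
  shows "\<exists>z. \<forall>x. \<phi> x = cinner z x"
proof -
  obtain z where z: "\<And>x. Re (\<phi> x) = Re (cinner z x)"
    using riesz_representation_Re[OF bounded_linear_compose[OF bounded_linear_Re assms(1)]] by auto
  have "\<phi> x = cinner z x" for x
  proof (rule complex_eqI)
    show "Im (\<phi> x) = Im (cinner z x)"
      using z[of "\<i> *\<^sub>C x"] by (simp add: scaleC cinner_scaleC_right)
  qed (rule z)
  then show ?thesis
    by blast
qed

lemma cadjoint_exists:
  fixes f :: "'a::chilbert_space \<Rightarrow> 'b::complex_inner"
  assumes "bounded_clinear f"
  shows "\<exists>g. \<forall>x y. cinner (f x) y = cinner x (g y)"
proof -
  have "\<exists>z. \<forall>x. cinner y (f x) = cinner z x" for y
  proof (rule riesz_representation)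
    show "bounded_linear (\<lambda>x. cinner y (f x))"
      using assms bounded_linear_compose[OF bounded_linear_cinner_right]
      unfolding bounded_clinear_def by blast
    show "cinner y (f (c *\<^sub>C x)) = c * cinner y (f x)" for c x
      using assms by (simp add: bounded_clinear_def cinner_scaleC_right)
  qed
  then obtain g where "\<And>y x. cinner y (f x) = cinner (g y) x"
    by metis
  then have "cinner (f x) y = cinner x (g y)" for x y
    by (metis cinner_commute)
  then show ?thesis
    by blast
qed

text \<open>Since \<^const>\<open>cadjoint\<close> is defined by choice, its defining identity is only
  available once adjoints are known to exist; this is where completeness of the domain enters.\<close>

lemma cinner_cadjoint:
  fixes f :: "'a::chilbert_space \<Rightarrow> 'b::complex_inner"
  assumes "bounded_clinear f"
  shows "cinner (f x) y = cinner x (cadjoint f y)"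
  using someI_ex[OF cadjoint_exists[OF assms]] unfolding cadjoint_def by blast

lemma cadjoint_eqI:
  fixes f :: "'a::complex_inner \<Rightarrow> 'b::complex_inner"
  assumes "\<And>x y. cinner (f x) y = cinner x (g y)"
  shows "cadjoint f = g"
proof
  fix y
  have "\<forall>x y. cinner (f x) y = cinner x (cadjoint f y)"
    unfolding cadjoint_def by (rule someI[of _ g]) (use assms in blast)
  then show "cadjoint f y = g y"
    by (intro cinner_eqI) (metis assms)
qed

lemma norm_le_if_onorm_le:
  assumes "bounded_linear f" and "onorm f \<le> K"
  shows "norm (f x) \<le> K * norm x"
  using onorm[OF assms(1), of x] mult_right_mono[OF assms(2) norm_ge_zero[of x]] by (rule order_trans)

lemma cinner_fixed_ker_eq_0_if_contraction:
  fixes a :: "'a::complex_inner \<Rightarrow> 'a"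
  assumes "bounded_clinear a" and contraction: "\<And>v. norm (a v) \<le> norm v"
    and "a u = u" and "a y = 0"
  shows "cinner u y = 0"
proof -
  interpret a: bounded_linear a
    using assms(1) by (simp add: bounded_clinear_def)
  have Re_eq_0: "Re (cinner u v) = 0" if "a v = 0" for v
  proof (rule Re_cinner_eq_0_if_norm_le_norm_add)
    show "norm u \<le> norm (u + t *\<^sub>R v)" for t
      using contraction[of "u + t *\<^sub>R v"] \<open>a u = u\<close> that by (simp add: a.add a.scale)
  qed
  have "a (\<i> *\<^sub>C y) = 0"
    using assms(1,4) by (simp add: bounded_clinear_def)
  then have "Im (cinner u y) = 0"
    using Re_eq_0[of "\<i> *\<^sub>C y"] by (simp add: cinner_scaleC_right)
  then show ?thesis
    using Re_eq_0[OF \<open>a y = 0\<close>] by (simp add: complex_eqI)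
qed

lemma cadjoint_eq_self_if_idempotent_contraction:
  fixes a :: "'a::complex_inner \<Rightarrow> 'a"
  assumes "bounded_clinear a" and "a \<circ> a = a" and "\<And>v. norm (a v) \<le> norm v"
  shows "cadjoint a = a"
proof (rule cadjoint_eqI)
  interpret a: bounded_linear a
    using assms(1) by (simp add: bounded_clinear_def)
  have fixed: "a (a x) = a x" for x
    using assms(2) by (metis comp_apply)
  then have ker: "a (x - a x) = 0" for x
    by (simp add: a.diff)
  have orth: "cinner (a x) (y - a y) = 0" for x y
    using cinner_fixed_ker_eq_0_if_contraction[OF assms(1,3) fixed ker] .
  fix x y
  have "cinner (a x) y = cinner (a x) (a y)"
    using orth[of x y] by (simp add: cinner_diff_right)
  also have "\<dots> = cinner x (a y)"
    using orth[of y x] cinner_commute[of "a y" "x - a x"] by (simp add: cinner_diff_left)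
  finally show "cinner (a x) y = cinner x (a y)" .
qed

lemma eq_at_fixed_point_if_norm_add_le:
  fixes b c :: "'a::chilbert_space \<Rightarrow> 'b::complex_inner"
  assumes "bounded_clinear c" and "cadjoint c (b u) = u" and "norm (b u + c u) \<le> 2 * norm u"
  shows "b u = c u"
proof -
  have "Re (cinner (b u) (c u)) = (norm u)\<^sup>2"
    using cinner_cadjoint[OF assms(1), of u "b u"] assms(2) Re_cinner_commute[of "c u" "b u"]
    by (simp add: power2_norm_eq_cinner)
  moreover have "(norm (b u + c u))\<^sup>2 \<le> 4 * (norm u)\<^sup>2"
    using power_mono[OF assms(3), of 2] by (simp add: power_mult_distrib)
  ultimately have "(norm (b u - c u))\<^sup>2 \<le> 0"
    using power2_norm_add[of "b u" "c u"] power2_norm_diff[of "b u" "c u"] by linarith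
  then show ?thesis
    by simp
qed

lemma eq_if_ker_subset:
  fixes p :: "'a::chilbert_space \<Rightarrow> 'a" and b c :: "'a \<Rightarrow> 'b::complex_inner"
  assumes "linear p" and "p \<circ> p = p" and "linear b" and "bounded_clinear c"
    and "cadjoint c \<circ> b = p" and "\<And>x. norm (b x + c x) \<le> 2 * norm x"
    and "ker p \<subseteq> ker b \<inter> ker c"
  shows "b = c"
proof
  fix x
  interpret p: linear p by fact
  interpret b: linear b by fact
  interpret c: linear c
    using assms(4) by (simp add: bounded_clinear_def bounded_linear.linear)
  have "p (p x) = p x"
    using assms(2) by (metis comp_apply)
  then have "p (x - p x) = 0"
    by (simp add: p.diff)
  then have "b x = b (p x)" and "c x = c (p x)"
    using assms(7) by (auto simp: ker_def b.diff c.diff)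
  moreover have "b (p x) = c (p x)"
  proof (rule eq_at_fixed_point_if_norm_add_le[OF assms(4) _ assms(6)])
    show "cadjoint c (b (p x)) = p x"
      using assms(5) \<open>p (p x) = p x\<close> by (metis comp_apply)
  qed
  ultimately show "b x = c x"
    by simp
qed

lemma ker_eq_if_cadjoint_comp_self:
  fixes b :: "'a::chilbert_space \<Rightarrow> 'b::complex_inner"
  assumes "bounded_clinear b" and "is_orth_proj p" and "cadjoint b \<circ> b = p"
  shows "ker b = ker p"
proof -
  have "bounded_clinear p" and "p \<circ> p = p" and "cadjoint p = p"
    using assms(2) by (auto simp: is_orth_proj_def)
  have "(norm (b x))\<^sup>2 = (norm (p x))\<^sup>2" for x
  proof -
    have "cinner (b x) (b x) = cinner x (p x)"
      using cinner_cadjoint[OF assms(1), of x "b x"] assms(3) by (metis comp_apply)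
    also have "\<dots> = cinner (p x) (p x)"
      using cinner_cadjoint[OF \<open>bounded_clinear p\<close>, of x "p x"] \<open>p \<circ> p = p\<close> \<open>cadjoint p = p\<close>
      by (metis comp_apply)
    finally show ?thesis
      by (simp add: power2_norm_eq_cinner)
  qed
  then show ?thesis
    unfolding ker_def by (metis norm_eq_zero power_zero_numeral zero_eq_power2)
qed

theorem lemma4p1:
  fixes a p b c :: "'a::chilbert_space \<Rightarrow> 'a"
  shows "(bounded_clinear a \<and> a \<circ> a = a \<and> onorm a \<le> 1 \<longrightarrow> cadjoint a = a)
    \<and> (is_orth_proj p \<and> bounded_clinear b \<and> bounded_clinear c
         \<and> cadjoint c \<circ> b = p \<and> onorm (\<lambda>x. b x + c x) \<le> 2
       \<longrightarrow> (ker p \<subseteq> ker b \<inter> ker c \<longleftrightarrow> b = c)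
         \<and> (b = c \<longrightarrow> ker p = ker b \<and> ker p = ker c))"
proof -
  have "cadjoint a = a" if "bounded_clinear a" and "a \<circ> a = a" and "onorm a \<le> 1"
    using that norm_le_if_onorm_le[of a 1]
    by (intro cadjoint_eq_self_if_idempotent_contraction) (auto simp: bounded_clinear_def)
  moreover have "(ker p \<subseteq> ker b \<inter> ker c \<longleftrightarrow> b = c) \<and> (b = c \<longrightarrow> ker p = ker b \<and> ker p = ker c)"
    if p: "is_orth_proj p" and b: "bounded_clinear b" and c: "bounded_clinear c"
      and "cadjoint c \<circ> b = p" and "onorm (\<lambda>x. b x + c x) \<le> 2"
  proof -
    have "bounded_linear b" "bounded_linear c" "bounded_linear p" "p \<circ> p = p"
      using p b c by (simp_all add: bounded_clinear_def is_orth_proj_def)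
    then have "norm (b x + c x) \<le> 2 * norm x" for x
      using norm_le_if_onorm_le bounded_linear_add \<open>onorm (\<lambda>x. b x + c x) \<le> 2\<close> by blast
    then have "ker p \<subseteq> ker b \<inter> ker c \<Longrightarrow> b = c"
      using eq_if_ker_subset[of p b c] \<open>cadjoint c \<circ> b = p\<close> \<open>p \<circ> p = p\<close> c
        \<open>bounded_linear b\<close> \<open>bounded_linear p\<close> bounded_linear.linear by blast
    moreover have "b = c \<Longrightarrow> ker b = ker p"
      using ker_eq_if_cadjoint_comp_self[OF b p] \<open>cadjoint c \<circ> b = p\<close> by blast
    ultimately show ?thesis
      by blast
  qed
  ultimately show ?thesis
    by blast
qed

end
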